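(* Let $E$ be a finite set and $V \subset \mathbb R^E$ a linear subspace defining an oriented matroid $M$. If $G \subset E$ is an acyclic flat of $M$, then \[ \mathcal Y_V \cap \big((\mathbb P^1_{\mathbb R})^G \times \infty^{E \setminus G}\big) = \mathcal Y_{\pi_G(V)} \times \infty^{E \setminus G}. \]
   Context: $\mathbb P^1_{\mathbb R} = \mathbb R\cup\{\infty\}$. For a linear subspace $W \subset \mathbb R^S$ ($S$ finite), $\mathcal Y_W$ denotes the closure of $W \cap \mathbb R_{\geq 0}^S$ in $(\mathbb P^1_{\mathbb R})^S$ in the analytic topology. $\pi_G : \mathbb R^E \to \mathbb R^G$ is the coordinate projection. $(\mathbb P^1_{\mathbb R})^G \times \infty^{E\setminus G}$ is the set of points of $(\mathbb P^1_{\mathbb R})^E$ with all coordinates in $E\setminus G$ equal to $\infty$. Flats of $M$ are the zero sets $\{i: v_i=0\}$ of $v \in V$; a flat $G$ is acyclic if some $v \in V$ has $v_i = 0$ for $i \in G$ and $v_i > 0$ for $i \notin G$. *)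

theory Defs
  imports "HOL-Analysis.Analysis"
begin

text \<open>The real projective line P^1_R = R \<union> {\<infinity>} is modelled by the type real option:
  Some a is the real number a and None is the point \<infinity>.
  A vector of R^S (S a finite subset of the ground type) is a function into real that is 0
  outside S; a point of (P^1_R)^S is a function into real option that is undefined outside S.\<close>

type_synonym p1 = "real option"

abbreviation p1_infty :: p1 where "p1_infty \<equiv> None"

fun p1_tendsto :: "(nat \<Rightarrow> real) \<Rightarrow> p1 \<Rightarrow> bool" where
  "p1_tendsto f (Some a) = (f \<longlonglongrightarrow> a)"
| "p1_tendsto f None = filterlim (\<lambda>n. \<bar>f n\<bar>) at_top sequentially"

text \<open>Y_W: closure of W \<inter> R_{\<ge>0}^S inside (P^1_R)^S (a finite product of metrizable spaces,
  so the closure is the sequential closure; convergence in a finite product is coordinatewise).\<close>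
definition Ycl :: "'e set \<Rightarrow> ('e \<Rightarrow> real) set \<Rightarrow> ('e \<Rightarrow> p1) set" where
  "Ycl S W = {x. (\<forall>i. i \<notin> S \<longrightarrow> x i = undefined) \<and>
      (\<exists>w :: nat \<Rightarrow> 'e \<Rightarrow> real. (\<forall>n. w n \<in> W \<and> (\<forall>i\<in>S. 0 \<le> w n i)) \<and>
          (\<forall>i\<in>S. p1_tendsto (\<lambda>n. w n i) (x i)))}"

definition lin_subspace :: "'e set \<Rightarrow> ('e \<Rightarrow> real) set \<Rightarrow> bool" where
  "lin_subspace E V \<longleftrightarrow> (\<forall>v\<in>V. \<forall>i. i \<notin> E \<longrightarrow> v i = 0) \<and> (\<lambda>i. 0) \<in> V \<and>
     (\<forall>v\<in>V. \<forall>w\<in>V. (\<lambda>i. v i + w i) \<in> V) \<and> (\<forall>c. \<forall>v\<in>V. (\<lambda>i. c * v i) \<in> V)"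

definition proj :: "'e set \<Rightarrow> ('e \<Rightarrow> real) \<Rightarrow> ('e \<Rightarrow> real)" where
  "proj G v = (\<lambda>i. if i \<in> G then v i else 0)"

definition is_flat :: "'e set \<Rightarrow> ('e \<Rightarrow> real) set \<Rightarrow> 'e set \<Rightarrow> bool" where
  "is_flat E V G \<longleftrightarrow> (\<exists>v\<in>V. G = {i\<in>E. v i = 0})"

definition is_acyclic_flat :: "'e set \<Rightarrow> ('e \<Rightarrow> real) set \<Rightarrow> 'e set \<Rightarrow> bool" where
  "is_acyclic_flat E V G \<longleftrightarrow> is_flat E V G \<and>
     (\<exists>v\<in>V. (\<forall>i\<in>G. v i = 0) \<and> (\<forall>i\<in>E - G. v i > 0))"

definition infty_outside :: "'e set \<Rightarrow> 'e set \<Rightarrow> ('e \<Rightarrow> p1) set" where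
  "infty_outside E G = {x. (\<forall>i. i \<notin> E \<longrightarrow> x i = undefined) \<and> (\<forall>i\<in>E - G. x i = None)}"

text \<open>A \<times> \<infinity>^(E-G) for A \<subseteq> (P^1_R)^G, as a subset of (P^1_R)^E.\<close>
definition times_infty :: "'e set \<Rightarrow> 'e set \<Rightarrow> ('e \<Rightarrow> p1) set \<Rightarrow> ('e \<Rightarrow> p1) set" where
  "times_infty E G A = {x. (\<lambda>i. if i \<in> G then x i else undefined) \<in> A \<and>
      (\<forall>i\<in>E - G. x i = None) \<and> (\<forall>i. i \<notin> E \<longrightarrow> x i = undefined)}"

end

theory Submission
  imports Defs
begin

text \<open>Projecting a nonnegative approximating sequence of V to the coordinates in G gives one
  of pi_G(V), so only the reverse inclusion has content. For it, lift the approximating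
  vectors of pi_G(V) to V and add a large multiple of a vector v0 in V that vanishes
  on G and is positive on E - G (it exists because G is acyclic): this leaves the coordinates
  in G unchanged and drives all others to +\<infinity>, in particular keeping them nonnegative.\<close>

lemma lin_subspace_add_scaled:
  assumes "lin_subspace E V" "v \<in> V" "u \<in> V"
  shows "(\<lambda>i. v i + c * u i) \<in> V"
proof -
  have scaled: "(\<lambda>i. c * u i) \<in> V"
    using assms(1,3) unfolding lin_subspace_def by blast
  have "\<forall>v\<in>V. \<forall>w\<in>V. (\<lambda>i. v i + w i) \<in> V"
    using assms(1) unfolding lin_subspace_def by blast
  from this[rule_format, OF assms(2) scaled] show ?thesis
    by simp
qed

lemma p1_tendsto_infty_if_ge_real:
  assumes "\<And>n. real n \<le> f n"
  shows "p1_tendsto f p1_infty"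
proof -
  have "\<forall>\<^sub>F n in sequentially. real n \<le> \<bar>f n\<bar>"
    using assms by (meson abs_ge_self always_eventually order_trans)
  then show ?thesis
    by (simp add: filterlim_at_top_mono[OF filterlim_real_sequentially])
qed

lemma finite_exists_scale_ge:
  fixes a b :: "'a \<Rightarrow> real"
  assumes "finite S" "\<forall>i\<in>S. 0 < b i"
  shows "\<exists>c. \<forall>i\<in>S. a i \<le> c * b i"
proof (intro exI ballI)
  fix i assume "i \<in> S"
  have "\<bar>a i\<bar> / b i \<le> (\<Sum>j\<in>S. \<bar>a j\<bar> / b j)"
    using assms \<open>i \<in> S\<close> by (intro member_le_sum) auto
  then show "a i \<le> (\<Sum>j\<in>S. \<bar>a j\<bar> / b j) * b i"
    using assms \<open>i \<in> S\<close> by (simp add: pos_divide_le_eq)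
qed

lemma lin_subspace_raise_outside:
  assumes "finite E" "lin_subspace E V" "v \<in> V"
    and "v\<^sub>0 \<in> V" "\<forall>i\<in>G. v\<^sub>0 i = 0" "\<forall>i\<in>E - G. 0 < v\<^sub>0 i"
  shows "\<exists>w\<in>V. (\<forall>i\<in>G. w i = v i) \<and> (\<forall>i\<in>E - G. t \<le> w i)"
proof -
  obtain c where c: "\<forall>i\<in>E - G. t - v i \<le> c * v\<^sub>0 i"
    using finite_exists_scale_ge[of "E - G" v\<^sub>0 "\<lambda>i. t - v i"] assms(1,6) by blast
  show ?thesis
  proof (intro bexI conjI ballI)
    show "(\<lambda>i. v i + c * v\<^sub>0 i) \<in> V"
      using lin_subspace_add_scaled assms(2-4) by blast
    show "v i + c * v\<^sub>0 i = v i" if "i \<in> G" for i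
      using assms(5) that by simp
    show "t \<le> v i + c * v\<^sub>0 i" if "i \<in> E - G" for i
    proof -
      have "t - v i \<le> c * v\<^sub>0 i"
        using c that by blast
      then show ?thesis by linarith
    qed
  qed
qed

lemma Ycl_restrict_proj:
  assumes "G \<subseteq> E" "x \<in> Ycl E V"
  shows "restrict x G \<in> Ycl G (proj G ` V)"
proof -
  obtain w where w: "\<forall>n. w n \<in> V \<and> (\<forall>i\<in>E. 0 \<le> w n i)"
    and lim: "\<forall>i\<in>E. p1_tendsto (\<lambda>n. w n i) (x i)"
    using assms(2) unfolding Ycl_def by blast
  show ?thesis
    unfolding Ycl_def
  proof (intro CollectI conjI exI[of _ "\<lambda>n. proj G (w n)"])
    show "\<forall>n. proj G (w n) \<in> proj G ` V \<and> (\<forall>i\<in>G. 0 \<le> proj G (w n) i)"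
      using w assms(1) by (auto simp: proj_def)
    show "\<forall>i\<in>G. p1_tendsto (\<lambda>n. proj G (w n) i) (restrict x G i)"
      using lim assms(1) by (auto simp: proj_def)
  qed auto
qed

lemma times_infty_Ycl_proj_subset_Ycl:
  assumes "finite E" "lin_subspace E V" "G \<subseteq> E"
    and "v\<^sub>0 \<in> V" "\<forall>i\<in>G. v\<^sub>0 i = 0" "\<forall>i\<in>E - G. 0 < v\<^sub>0 i"
  shows "times_infty E G (Ycl G (proj G ` V)) \<subseteq> Ycl E V"
proof
  fix x assume "x \<in> times_infty E G (Ycl G (proj G ` V))"
  then have x_G: "restrict x G \<in> Ycl G (proj G ` V)"
    and x_infty: "\<forall>i\<in>E - G. x i = p1_infty"
    and x_undef: "\<forall>i. i \<notin> E \<longrightarrow> x i = undefined"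
    unfolding times_infty_def restrict_def by blast+
  obtain u where u: "\<forall>n. u n \<in> proj G ` V \<and> (\<forall>i\<in>G. 0 \<le> u n i)"
    and lim: "\<forall>i\<in>G. p1_tendsto (\<lambda>n. u n i) (x i)"
    using x_G unfolding Ycl_def by auto
  have "\<exists>w\<in>V. (\<forall>i\<in>G. w i = u n i) \<and> (\<forall>i\<in>E - G. real n \<le> w i)" for n
  proof -
    obtain v where "v \<in> V" "u n = proj G v"
      using u by blast
    then show ?thesis
      using lin_subspace_raise_outside[OF assms(1,2) \<open>v \<in> V\<close> assms(4-6)]
      by (simp add: proj_def)
  qed
  then obtain w where w: "\<And>n. w n \<in> V" "\<And>n i. i \<in> G \<Longrightarrow> w n i = u n i"
    "\<And>n i. i \<in> E - G \<Longrightarrow> real n \<le> w n i"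
    by metis
  show "x \<in> Ycl E V"
    unfolding Ycl_def
  proof (intro CollectI conjI exI[of _ w] allI ballI impI)
    fix n i assume "i \<in> E"
    show "0 \<le> w n i"
      using u w(2,3)[of i n] \<open>i \<in> E\<close> by (cases "i \<in> G") force+
    show "p1_tendsto (\<lambda>n. w n i) (x i)"
    proof (cases "i \<in> G")
      case True
      then show ?thesis using lim w(2) by simp
    next
      case False
      then have "p1_tendsto (\<lambda>n. w n i) p1_infty"
        using w(3) \<open>i \<in> E\<close> by (intro p1_tendsto_infty_if_ge_real) blast
      then show ?thesis using False \<open>i \<in> E\<close> x_infty by simp
    qed
  qed (use w(1) x_undef in auto)
qed

theorem corollary3p4:
  fixes E G :: "'e set" and V :: "('e \<Rightarrow> real) set"
  assumes "finite E"
    and "lin_subspace E V"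
    and "G \<subseteq> E"
    and "is_acyclic_flat E V G"
  shows "Ycl E V \<inter> infty_outside E G = times_infty E G (Ycl G (proj G ` V))"
proof
  show "Ycl E V \<inter> infty_outside E G \<subseteq> times_infty E G (Ycl G (proj G ` V))"
    using Ycl_restrict_proj[OF assms(3)]
    unfolding times_infty_def infty_outside_def restrict_def by blast
next
  obtain v\<^sub>0 where v\<^sub>0: "v\<^sub>0 \<in> V" "\<forall>i\<in>G. v\<^sub>0 i = 0" "\<forall>i\<in>E - G. 0 < v\<^sub>0 i"
    using assms(4) unfolding is_acyclic_flat_def by blast
  have "times_infty E G A \<subseteq> infty_outside E G" for A
    unfolding times_infty_def infty_outside_def by blast
  then show "times_infty E G (Ycl G (proj G ` V)) \<subseteq> Ycl E V \<inter> infty_outside E G"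
    using times_infty_Ycl_proj_subset_Ycl[OF assms(1-3) v\<^sub>0] by blast
qed

end
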